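(* Let $V$ be an $\mathcal{H}$-module vertex algebra and let $W=\bigoplus_{n\in\mathbb{Z}}W_n$ be a $(V,\mathcal{H})$-module. Then every $f\in\mathrm{Hom}_{(V,\mathcal{H})}(V,W)$ satisfies $f(V_n)\subset W_n$ for all $n\in\mathbb{Z}$.
   Context: Throughout, $\mathbb{F}$ is an algebraically closed field of odd prime characteristic $p$; vertex algebras and modules are over $\mathbb{F}$. Every vertex algebra $V$ is a module for the bialgebra $\mathcal{B}$ with basis $\{\mathcal{D}^{(n)}\}_{n\in\mathbb{N}}$, $\mathcal{D}^{(m)}\mathcal{D}^{(n)}=\binom{m+n}{n}\mathcal{D}^{(m+n)}$, via $\mathcal{D}^{(n)}v=v_{-n-1}\mathbf{1}$. $\mathcal{H}$: let $\mathfrak{sl}_2$ over $\mathbb{C}$ have basis $L_{-1},L_0,L_1$ with $[L_1,L_{-1}]=2L_0$, $[L_0,L_{\pm1}]=\mp L_{\pm1}$; put $L_{\pm1}^{(n)}=L_{\pm1}^n/n!$, $L_0^{(n)}=\binom{-2L_0}{n}$ in $U(\mathfrak{sl}_2)$; $U(\mathfrak{sl}_2)_{\mathbb{Z}}$ is the $\mathbb{Z}$-span of the $L_{-1}^{(i)}L_0^{(j)}L_1^{(k)}$, and $\mathcal{H}=\mathbb{F}\otimes_{\mathbb{Z}}U(\mathfrak{sl}_2)_{\mathbb{Z}}$. $e^{zL_{\pm1}}=\sum_{n\ge0}z^nL_{\pm1}^{(n)}$. For $v$ homogeneous of degree $n$, $f(z)^{\deg}v:=f(z)^nv$, extended linearly.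 A $\mathbb{Z}$-graded vertex algebra: $V=\bigoplus V_n$, $\mathbf{1}\in V_0$, $u_rV_n\subset V_{m+n-r-1}$ for $u\in V_m$. A $\mathbb{Z}$-graded weight $\mathcal{H}$-module: $W=\bigoplus W_n$ with $\mathcal{H}$-action, $L_{\pm1}^{(r)}W_n\subset W_{n\mp r}$, $L_0^{(r)}|_{W_n}=\binom{-2n}{r}$. An $\mathcal{H}$-module vertex algebra: a $\mathbb{Z}$-graded vertex algebra $V$ which is a $\mathbb{Z}$-graded weight $\mathcal{H}$-module with $L_{-1}^{(n)}=\mathcal{D}^{(n)}$, such that $V_n=0$ for $n\ll0$, $L_1^{(n)}\mathbf{1}=\delta_{n,0}\mathbf{1}$, and $e^{zL_1}Y(v,z_0)e^{-zL_1}=Y\bigl(e^{z(1-zz_0)L_1}(1-zz_0)^{-2\deg}v,z_0/(1-zz_0)\bigr)$ for $v\in V$. A $(V,\mathcal{H})$-module: a $\mathbb{Z}$-graded weight $\mathcal{H}$-module $W$ which is a $\mathbb{Z}$-graded $V$-module ($v_mW_n\subset W_{k+n-m-1}$ for $v\in V_k$) satisfying $e^{zL_{-1}}Y_W(v,x)e^{-zL_{-1}}=Y_W(e^{zL_{-1}}v,x)$ and $e^{zL_1}Y_W(v,z_0)e^{-zL_1}=Y_W\bigl(e^{z(1-zz_0)L_1}(1-zz_0)^{-2\deg}v,z_0/(1-zz_0)\bigr)$. $\mathrm{Hom}_{(V,\mathcal{H})}(V,W)$ is the space of linear maps that are both $V$-module and $\mathcal{H}$-module homomorphisms. *)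

theory Defs
  imports "HOL-Computational_Algebra.Polynomial"
begin

text \<open>The mode v_n u of a vertex
operator Y(v,z) = sum_n v_n z^(-n-1) is written Y v n u.\<close>

definition alg_closed_field :: "'k::field itself \<Rightarrow> bool" where
  "alg_closed_field _ \<longleftrightarrow> (\<forall>q::'k poly. degree q \<ge> 1 \<longrightarrow> (\<exists>x. poly q x = 0))"

definition ibinom :: "int \<Rightarrow> nat \<Rightarrow> int" where
  "ibinom a k = (\<Prod>i<k. a - int i) div fact k"

definition fsum :: "(nat \<Rightarrow> 'a::comm_monoid_add) \<Rightarrow> 'a" where
  "fsum f = sum f {i. f i \<noteq> 0}"

definition graded_space :: "('k::field \<Rightarrow> 'x::ab_group_add \<Rightarrow> 'x) \<Rightarrow> (int \<Rightarrow> 'x set) \<Rightarrow> bool" where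
  "graded_space s G \<longleftrightarrow> vector_space s \<and> (\<forall>n. module.subspace s (G n)) \<and>
     (\<forall>x. \<exists>!c. finite {n. c n \<noteq> 0} \<and> (\<forall>n. c n \<in> G n) \<and> x = sum c {n. c n \<noteq> 0})"

text \<open>Borcherds (Jacobi) identity in modes, for u v in V and w in the module
(YW = Y for V itself).\<close>
definition borcherds ::
  "('k::field \<Rightarrow> 'w::ab_group_add \<Rightarrow> 'w) \<Rightarrow> ('v \<Rightarrow> int \<Rightarrow> 'v \<Rightarrow> 'v) \<Rightarrow> ('v \<Rightarrow> int \<Rightarrow> 'w \<Rightarrow> 'w)
    \<Rightarrow> 'v \<Rightarrow> 'v \<Rightarrow> 'w \<Rightarrow> int \<Rightarrow> int \<Rightarrow> int \<Rightarrow> bool" where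
  "borcherds s Y YW u v w m n r \<longleftrightarrow>
     fsum (\<lambda>i. s (of_int (ibinom (m::int) i)) (YW (Y u (r + int i) v) (m + (n::int) - int i) w)) =
     fsum (\<lambda>i. s (of_int ((-1::int)^i * (ibinom (r::int) i))) (YW u (m + r - int i) (YW v (n + int i) w)))
     - s (if even r then 1 else -1)
         (fsum (\<lambda>i. s (of_int ((-1::int)^i * (ibinom r i))) (YW v (n + r - int i) (YW u (m + int i) w))))"

definition vertex_algebra :: "('k::field \<Rightarrow> 'v::ab_group_add \<Rightarrow> 'v) \<Rightarrow> ('v \<Rightarrow> int \<Rightarrow> 'v \<Rightarrow> 'v) \<Rightarrow> 'v \<Rightarrow> bool" where
  "vertex_algebra s Y one \<longleftrightarrow> vector_space s \<and>
     (\<forall>u n. Vector_Spaces.linear s s (Y u n)) \<and> (\<forall>n x. Vector_Spaces.linear s s (\<lambda>u. Y u n x)) \<and>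
     (\<forall>u v. \<exists>N. \<forall>n\<ge>N. Y u n v = 0) \<and>
     (\<forall>v n. Y one n v = (if n = -1 then v else 0)) \<and>
     (\<forall>v. Y v (-1) one = v \<and> (\<forall>n\<ge>0. Y v n one = 0)) \<and>
     (\<forall>u v w m n r. borcherds s Y Y u v w m n r)"

definition graded_vertex_algebra ::
  "('k::field \<Rightarrow> 'v::ab_group_add \<Rightarrow> 'v) \<Rightarrow> (int \<Rightarrow> 'v set) \<Rightarrow> ('v \<Rightarrow> int \<Rightarrow> 'v \<Rightarrow> 'v) \<Rightarrow> 'v \<Rightarrow> bool" where
  "graded_vertex_algebra s G Y one \<longleftrightarrow> vertex_algebra s Y one \<and> graded_space s G \<and> one \<in> G 0 \<and>
     (\<forall>m n u x r. u \<in> G m \<longrightarrow> x \<in> G n \<longrightarrow> Y u r x \<in> G (m + n - r - 1))"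

text \<open>Lm r, Lz r, Lp r are the actions of the generators
L_{-1}^{(r)}, L_0^{(r)}, L_1^{(r)} of H = F (x) U(sl2)_Z. With e = L_1, f = -L_{-1},
h = -2 L_0 (a standard sl2-triple, L_0^{(r)} = binom(h,r)), the conditions below are the
defining relations of the Kostant Z-form on weight modules: divided power relations and
e^(a) f^(b) = sum_k f^(b-k) binom(h-a-b+2k,k) e^(a-k); on W_n the weight condition forces
binom(h-a-b+2k,k) e^(a-k) = binom(-2n+a-b,k) e^(a-k).\<close>
definition weight_H_module ::
  "('k::field \<Rightarrow> 'x::ab_group_add \<Rightarrow> 'x) \<Rightarrow> (int \<Rightarrow> 'x set)
    \<Rightarrow> (nat \<Rightarrow> 'x \<Rightarrow> 'x) \<Rightarrow> (nat \<Rightarrow> 'x \<Rightarrow> 'x) \<Rightarrow> (nat \<Rightarrow> 'x \<Rightarrow> 'x) \<Rightarrow> bool" where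
  "weight_H_module s G Lm Lz Lp \<longleftrightarrow> graded_space s G \<and>
     (\<forall>r. Vector_Spaces.linear s s (Lm r) \<and> Vector_Spaces.linear s s (Lz r) \<and> Vector_Spaces.linear s s (Lp r)) \<and>
     (\<forall>r n x. x \<in> G n \<longrightarrow> Lm r x \<in> G (n + int r) \<and> Lp r x \<in> G (n - int r) \<and>
                Lz r x = s (of_int (ibinom (- 2 * (n::int)) r)) x) \<and>
     (\<forall>x. Lm 0 x = x \<and> Lp 0 x = x) \<and>
     (\<forall>a b x. Lm a (Lm b x) = s (of_nat ((a + b) choose a)) (Lm (a + b) x) \<and>
              Lp a (Lp b x) = s (of_nat ((a + b) choose a)) (Lp (a + b) x)) \<and>
     (\<forall>a b n x. x \<in> G n \<longrightarrow>
        Lp a (Lm b x) = (\<Sum>k\<le>min a b. s (of_int ((-1::int)^k * (ibinom (- 2 * (n::int) + int a - int b) k)))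
                                          (Lm (b - k) (Lp (a - k) x))))"

text \<open>Coefficient of z^N z0^(-M-1) in
  e^{z L_1} Y(v,z0) e^{-z L_1} = Y(e^{z(1-z z0)L_1}(1-z z0)^{-2 deg} v, z0/(1-z z0)),
for v homogeneous of degree k (the general case follows by linearity).\<close>
definition conj_L1 ::
  "('k::field \<Rightarrow> 'w::ab_group_add \<Rightarrow> 'w) \<Rightarrow> (int \<Rightarrow> 'v set) \<Rightarrow> (nat \<Rightarrow> 'v \<Rightarrow> 'v)
    \<Rightarrow> ('v \<Rightarrow> int \<Rightarrow> 'w \<Rightarrow> 'w) \<Rightarrow> (nat \<Rightarrow> 'w \<Rightarrow> 'w) \<Rightarrow> bool" where
  "conj_L1 sW GV LpV YW LpW \<longleftrightarrow>
     (\<forall>k v N M x. v \<in> GV k \<longrightarrow>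
        (\<Sum>a\<le>N. sW (of_int ((-1::int)^(N - a))) (LpW a (YW v M (LpW (N - a) x)))) =
        (\<Sum>i\<le>N. sW (of_int ((-1::int)^i * (ibinom (int N + (M::int) - 2 * (k::int) + 1) i))) (YW (LpV (N - i) v) (M + int i) x)))"

text \<open>Coefficient of z^N x^(-M-1) in e^{z L_{-1}} Y_W(v,x) e^{-z L_{-1}} = Y_W(e^{z L_{-1}} v, x).\<close>
definition conj_Lm ::
  "('k::field \<Rightarrow> 'w::ab_group_add \<Rightarrow> 'w) \<Rightarrow> (nat \<Rightarrow> 'v \<Rightarrow> 'v)
    \<Rightarrow> ('v \<Rightarrow> int \<Rightarrow> 'w \<Rightarrow> 'w) \<Rightarrow> (nat \<Rightarrow> 'w \<Rightarrow> 'w) \<Rightarrow> bool" where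
  "conj_Lm sW LmV YW LmW \<longleftrightarrow>
     (\<forall>v N M x. (\<Sum>a\<le>N. sW (of_int ((-1::int)^(N - a))) (LmW a (YW v M (LmW (N - a) x)))) = YW (LmV N v) M x)"

definition H_module_vertex_algebra ::
  "('k::field \<Rightarrow> 'v::ab_group_add \<Rightarrow> 'v) \<Rightarrow> (int \<Rightarrow> 'v set) \<Rightarrow> ('v \<Rightarrow> int \<Rightarrow> 'v \<Rightarrow> 'v) \<Rightarrow> 'v
    \<Rightarrow> (nat \<Rightarrow> 'v \<Rightarrow> 'v) \<Rightarrow> (nat \<Rightarrow> 'v \<Rightarrow> 'v) \<Rightarrow> (nat \<Rightarrow> 'v \<Rightarrow> 'v) \<Rightarrow> bool" where
  "H_module_vertex_algebra s G Y one Lm Lz Lp \<longleftrightarrow>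
     graded_vertex_algebra s G Y one \<and> weight_H_module s G Lm Lz Lp \<and>
     (\<forall>r v. Lm r v = Y v (- int r - 1) one) \<and>
     (\<exists>N. \<forall>n<N. G n = {0}) \<and>
     (\<forall>r. Lp r one = (if r = 0 then one else 0)) \<and>
     conj_L1 s G Lp Y Lp"

definition V_module ::
  "('k::field \<Rightarrow> 'v::ab_group_add \<Rightarrow> 'v) \<Rightarrow> ('v \<Rightarrow> int \<Rightarrow> 'v \<Rightarrow> 'v) \<Rightarrow> 'v
    \<Rightarrow> ('k \<Rightarrow> 'w::ab_group_add \<Rightarrow> 'w) \<Rightarrow> ('v \<Rightarrow> int \<Rightarrow> 'w \<Rightarrow> 'w) \<Rightarrow> bool" where
  "V_module sV Y one sW YW \<longleftrightarrow> vector_space sW \<and>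
     (\<forall>v n. Vector_Spaces.linear sW sW (YW v n)) \<and> (\<forall>n w. Vector_Spaces.linear sV sW (\<lambda>v. YW v n w)) \<and>
     (\<forall>v w. \<exists>N. \<forall>n\<ge>N. YW v n w = 0) \<and>
     (\<forall>w n. YW one n w = (if n = -1 then w else 0)) \<and>
     (\<forall>u v w m n r. borcherds sW Y YW u v w m n r)"

definition VH_module ::
  "('k::field \<Rightarrow> 'v::ab_group_add \<Rightarrow> 'v) \<Rightarrow> (int \<Rightarrow> 'v set) \<Rightarrow> ('v \<Rightarrow> int \<Rightarrow> 'v \<Rightarrow> 'v) \<Rightarrow> 'v
    \<Rightarrow> (nat \<Rightarrow> 'v \<Rightarrow> 'v) \<Rightarrow> (nat \<Rightarrow> 'v \<Rightarrow> 'v)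
    \<Rightarrow> ('k \<Rightarrow> 'w::ab_group_add \<Rightarrow> 'w) \<Rightarrow> (int \<Rightarrow> 'w set) \<Rightarrow> ('v \<Rightarrow> int \<Rightarrow> 'w \<Rightarrow> 'w)
    \<Rightarrow> (nat \<Rightarrow> 'w \<Rightarrow> 'w) \<Rightarrow> (nat \<Rightarrow> 'w \<Rightarrow> 'w) \<Rightarrow> (nat \<Rightarrow> 'w \<Rightarrow> 'w) \<Rightarrow> bool" where
  "VH_module sV GV Y one LmV LpV sW GW YW LmW LzW LpW \<longleftrightarrow>
     weight_H_module sW GW LmW LzW LpW \<and> V_module sV Y one sW YW \<and>
     (\<forall>k n v w (m::int). v \<in> GV k \<longrightarrow> w \<in> GW n \<longrightarrow> YW v m w \<in> GW (k + n - m - 1)) \<and>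
     conj_Lm sW LmV YW LmW \<and> conj_L1 sW GV LpV YW LpW"

definition VH_hom ::
  "('k::field \<Rightarrow> 'v::ab_group_add \<Rightarrow> 'v) \<Rightarrow> ('v \<Rightarrow> int \<Rightarrow> 'v \<Rightarrow> 'v)
    \<Rightarrow> (nat \<Rightarrow> 'v \<Rightarrow> 'v) \<Rightarrow> (nat \<Rightarrow> 'v \<Rightarrow> 'v) \<Rightarrow> (nat \<Rightarrow> 'v \<Rightarrow> 'v)
    \<Rightarrow> ('k \<Rightarrow> 'w::ab_group_add \<Rightarrow> 'w) \<Rightarrow> ('v \<Rightarrow> int \<Rightarrow> 'w \<Rightarrow> 'w)
    \<Rightarrow> (nat \<Rightarrow> 'w \<Rightarrow> 'w) \<Rightarrow> (nat \<Rightarrow> 'w \<Rightarrow> 'w) \<Rightarrow> (nat \<Rightarrow> 'w \<Rightarrow> 'w) \<Rightarrow> ('v \<Rightarrow> 'w) \<Rightarrow> bool" where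
  "VH_hom sV Y LmV LzV LpV sW YW LmW LzW LpW f \<longleftrightarrow>
     Vector_Spaces.linear sV sW f \<and>
     (\<forall>v m u. f (Y v m u) = YW v m (f u)) \<and>
     (\<forall>r u. f (LmV r u) = LmW r (f u) \<and> f (LzV r u) = LzW r (f u) \<and> f (LpV r u) = LpW r (f u))"

end

theory Submission
  imports Defs "HOL-Computational_Algebra.Primes"
begin

text \<open>The vacuum has degree 0, so it is killed by every L_0^(r) with r \<ge> 1, and so is its image
under a homomorphism f. On W_n the operator L_0^(r) acts by binom(-2n, r), and for n \<noteq> 0 some
such coefficient with r \<ge> 1 is nonzero in the field. Hence f(1) lies in W_0, and
f(v) = f(v_(-1) 1) = v_(-1) f(1) lies in W_n for v in V_n.\<close>

lemma ibinom_eqI: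
  assumes "real_of_int a gchoose k = real_of_int N"
  shows "ibinom a k = N"
proof -
  have "real_of_int (\<Prod>i<k. a - int i) = fact k * (real_of_int a gchoose k)"
    by (simp add: gbinomial_prod_rev of_int_prod atLeast0LessThan)
  also have "\<dots> = real_of_int (fact k * N)"
    using assms by simp
  finally have "(\<Prod>i<k. a - int i) = fact k * N"
    using of_int_eq_iff by blast
  then show ?thesis
    unfolding ibinom_def by simp
qed

lemma ibinom_of_nat: "ibinom (int a) k = int (a choose k)"
  by (rule ibinom_eqI) (simp add: binomial_gbinomial)

lemma ibinom_one: "ibinom a 1 = a"
  by (rule ibinom_eqI) simp

lemma ibinom_neg_of_nat: "ibinom (- int m) k = (-1) ^ k * int ((m + k - 1) choose k)"
proof (rule ibinom_eqI, cases "m = 0 \<and> k = 0")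
  case False
  then have "real k - (- real m) - 1 = real (m + k - 1)"
    by auto
  then show "real_of_int (- int m) gchoose k = real_of_int ((-1) ^ k * int ((m + k - 1) choose k))"
    using gbinomial_negated_upper[of "- real m" k] by (simp add: binomial_gbinomial)
qed simp

lemma prime_dvd_choose_prime_power:
  assumes p: "prime (p::nat)" and j: "0 < j" "j < p ^ e"
  shows "p dvd (p ^ e choose j)"
proof (rule ccontr)
  assume "\<not> p dvd (p ^ e choose j)"
  then have "coprime (p ^ e) (p ^ e choose j)"
    using p by (simp add: prime_imp_coprime)
  moreover have "p ^ e dvd (p ^ e choose j) * j"
  proof -
    obtain j' q' where "j = Suc j'" "p ^ e = Suc q'"
      using j by (metis gr0_implies_Suc less_trans)
    moreover have "Suc j' * (Suc q' choose Suc j') = Suc q' * (q' choose j')"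
      by (rule Suc_times_binomial)
    ultimately have "(p ^ e choose j) * j = p ^ e * (q' choose j')"
      by (simp add: mult.commute)
    then show ?thesis
      by (metis dvd_triv_left)
  qed
  ultimately have "p ^ e dvd j"
    using coprime_dvd_mult_right_iff by blast
  with j show False
    using nat_dvd_not_less by blast
qed

lemma of_nat_choose_prime_power_minus_one:
  assumes p: "prime CHAR('k::field)" and j: "j < CHAR('k) ^ e"
  shows "(of_nat ((CHAR('k) ^ e - 1) choose j) :: 'k) = (-1) ^ j"
  using j
proof (induction j)
  case (Suc j)
  define q where "q = CHAR('k) ^ e"
  have "CHAR('k) dvd (q choose Suc j)"
    using prime_dvd_choose_prime_power[OF p, of "Suc j" e] Suc.prems q_def by simp
  then have "(of_nat (q choose Suc j) :: 'k) = 0"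
    by (simp add: of_nat_eq_0_iff_char_dvd)
  moreover have "q choose Suc j = ((q - 1) choose j) + ((q - 1) choose Suc j)"
    using p q_def by (metis Suc_diff_1 binomial_Suc_Suc prime_gt_0_nat zero_less_power)
  ultimately have "(of_nat ((q - 1) choose Suc j) :: 'k) = - of_nat ((q - 1) choose j)"
    by (metis add.commute add_eq_0_iff of_nat_add)
  with Suc q_def show ?case
    by simp
qed simp

lemma ex_ibinom_nonzero:
  assumes "a \<noteq> 0"
  shows "\<exists>r\<ge>1. (of_int (ibinom a r) :: 'k::field) \<noteq> 0"
proof (cases "CHAR('k) = 0")
  case True
  then have "(of_int a :: 'k) \<noteq> 0"
    using assms by (simp add: of_int_eq_0_iff_char_dvd)
  then show ?thesis
    using ibinom_one[of a] by (intro exI[of _ 1]) simp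
next
  case False
  then have p: "prime CHAR('k)"
    by (simp add: prime_CHAR_semidom)
  show ?thesis
  proof (cases "a > 0")
    case True
    then show ?thesis
      using ibinom_of_nat[of "nat a" "nat a"] by (intro exI[of _ "nat a"]) simp
  next
    case False
    define m where "m = nat (- a)"
    define q where "q = CHAR('k) ^ m"
    have m: "a = - int m" "m \<ge> 1"
      using False assms m_def by auto
    \<comment> \<open>the witness r = p^m - m, for which binom(-m, r) = \<plusminus>binom(p^m - 1, r) = \<plusminus>1\<close>
    have "m < 2 ^ m"
      by (rule less_exp)
    also have "2 ^ m \<le> q"
      unfolding q_def using p prime_ge_2_nat power_mono by blast
    finally have mq: "m < q" .
    define r where "r = q - m"
    have r: "r \<ge> 1" "m + r - 1 = q - 1" "r < q"
      using mq m r_def by auto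
    have "(of_int (ibinom a r) :: 'k) = (-1) ^ r * of_nat ((q - 1) choose r)"
      using ibinom_neg_of_nat[of m r] m r by simp
    also have "\<dots> = (-1) ^ r * (-1) ^ r"
      using of_nat_choose_prime_power_minus_one[OF p, of r m] r q_def by simp
    finally show ?thesis
      using r by auto
  qed
qed

lemma graded_space_decomposition:
  assumes "graded_space s G"
  shows "\<exists>!c. finite {n. c n \<noteq> 0} \<and> (\<forall>n. c n \<in> G n) \<and> x = sum c {n. c n \<noteq> 0}"
  using assms by (simp add: graded_space_def)

lemma graded_space_components_eq_0:
  assumes G: "graded_space s G" and S: "finite S"
    and c: "\<And>n. c n \<in> G n" "\<And>n. n \<notin> S \<Longrightarrow> c n = 0" and sum: "sum c S = 0"
  shows "c n = 0"
proof -
  define decomposes_0 where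
    "decomposes_0 d \<longleftrightarrow> finite {n. d n \<noteq> 0} \<and> (\<forall>n. d n \<in> G n) \<and> 0 = sum d {n. d n \<noteq> 0}" for d
  have unique: "\<exists>!d. decomposes_0 d"
    unfolding decomposes_0_def by (rule graded_space_decomposition[OF G])
  have supp: "{n. c n \<noteq> 0} \<subseteq> S"
    using c(2) by blast
  then have "sum c {n. c n \<noteq> 0} = sum c S"
    using S by (intro sum.mono_neutral_left) auto
  then have "decomposes_0 c"
    unfolding decomposes_0_def using finite_subset[OF supp S] c(1) sum by simp
  moreover have "decomposes_0 (\<lambda>n. 0)"
  proof -
    interpret vector_space s
      using G unfolding graded_space_def by blast
    have "subspace (G n)" for n
      using G unfolding graded_space_def by blast
    then show ?thesis
      unfolding decomposes_0_def by (simp add: subspace_0)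
  qed
  ultimately have "c = (\<lambda>n. 0)"
    using the1_equality[OF unique] by metis
  then show ?thesis
    by simp
qed

lemma weight_H_module_graded_space:
  "weight_H_module s G Lm Lz Lp \<Longrightarrow> graded_space s G"
  unfolding weight_H_module_def by blast

lemma weight_H_module_linear_Lz:
  "weight_H_module s G Lm Lz Lp \<Longrightarrow> Vector_Spaces.linear s s (Lz r)"
  unfolding weight_H_module_def by blast

lemma weight_H_module_Lz:
  "weight_H_module s G Lm Lz Lp \<Longrightarrow> x \<in> G n \<Longrightarrow> Lz r x = s (of_int (ibinom (- 2 * n) r)) x"
  unfolding weight_H_module_def by blast

lemma weight_H_module_degree_0_if_Lz_vanishes:
  fixes s :: "'k::field \<Rightarrow> 'x::ab_group_add \<Rightarrow> 'x"
  assumes W: "weight_H_module s G Lm Lz Lp" and Lz: "\<And>r. r \<ge> 1 \<Longrightarrow> Lz r x = 0"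
  shows "x \<in> G 0"
proof -
  have G: "graded_space s G"
    using W by (rule weight_H_module_graded_space)
  interpret vector_space s
    using G unfolding graded_space_def by blast
  have subspace: "subspace (G n)" for n
    using G unfolding graded_space_def by blast
  obtain c where S: "finite {n. c n \<noteq> 0}" and c: "\<And>n. c n \<in> G n"
    and x_sum: "x = sum c {n. c n \<noteq> 0}"
    using graded_space_decomposition[OF G, of x] by blast
  define S where "S = {n. c n \<noteq> 0}"
  have "c n = 0" if "n \<noteq> 0" for n
  proof -
    obtain r where r: "r \<ge> 1" "(of_int (ibinom (- 2 * n) r) :: 'k) \<noteq> 0"
      using ex_ibinom_nonzero[of "- 2 * n"] \<open>n \<noteq> 0\<close> by auto
    define d where "d m = s (of_int (ibinom (- 2 * m) r)) (c m)" for m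
    have "module_hom s s (Lz r)"
      using weight_H_module_linear_Lz[OF W] by (simp add: module_hom_iff_linear)
    then have "Lz r x = (\<Sum>m\<in>S. Lz r (c m))"
      unfolding x_sum S_def by (rule module_hom.sum)
    also have "\<dots> = sum d S"
      unfolding d_def using weight_H_module_Lz[OF W c] by simp
    finally have "sum d S = 0"
      using Lz[OF r(1)] by simp
    moreover have "d m \<in> G m" for m
      unfolding d_def by (rule subspace_scale[OF subspace c])
    moreover have "d m = 0" if "m \<notin> S" for m
      using that by (simp add: S_def d_def)
    moreover have "finite S"
      using S by (simp add: S_def)
    ultimately have "d n = 0"
      using graded_space_components_eq_0[OF G] by blast
    then show ?thesis
      using r(2) by (simp add: d_def)
  qed
  then have "c n \<in> G 0" for n
    using c[of n] subspace_0[OF subspace] by (cases "n = 0") simp_all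
  then show ?thesis
    unfolding x_sum by (rule subspace_sum[OF subspace])
qed

lemma H_module_vertex_algebra_Lz_vacuum:
  assumes V: "H_module_vertex_algebra s G Y one Lm Lz Lp" and "r \<ge> 1"
  shows "Lz r one = 0"
proof -
  have "one \<in> G 0" and W: "weight_H_module s G Lm Lz Lp"
    using V unfolding H_module_vertex_algebra_def graded_vertex_algebra_def by blast+
  then have "Lz r one = s (of_int (ibinom 0 r)) one"
    using weight_H_module_Lz by fastforce
  moreover have "ibinom 0 r = 0"
    using ibinom_of_nat[of 0 r] assms(2) by simp
  moreover have "vector_space s"
    using weight_H_module_graded_space[OF W] unfolding graded_space_def by blast
  ultimately show ?thesis
    by (simp add: vector_space.scale_eq_0_iff)
qed

theorem lemma3p13:
  fixes p :: nat
    and sV :: "'k::field \<Rightarrow> 'v::ab_group_add \<Rightarrow> 'v" and GV :: "int \<Rightarrow> 'v set"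
    and Y :: "'v \<Rightarrow> int \<Rightarrow> 'v \<Rightarrow> 'v" and one :: 'v
    and LmV LzV LpV :: "nat \<Rightarrow> 'v \<Rightarrow> 'v"
    and sW :: "'k \<Rightarrow> 'w::ab_group_add \<Rightarrow> 'w" and GW :: "int \<Rightarrow> 'w set"
    and YW :: "'v \<Rightarrow> int \<Rightarrow> 'w \<Rightarrow> 'w"
    and LmW LzW LpW :: "nat \<Rightarrow> 'w \<Rightarrow> 'w"
    and f :: "'v \<Rightarrow> 'w"
  assumes "prime p" and "odd p" and "CHAR('k) = p" and "alg_closed_field TYPE('k)"
    and "H_module_vertex_algebra sV GV Y one LmV LzV LpV"
    and "VH_module sV GV Y one LmV LpV sW GW YW LmW LzW LpW"
    and "VH_hom sV Y LmV LzV LpV sW YW LmW LzW LpW f"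
  shows "\<forall>n. f ` GV n \<subseteq> GW n"
proof (intro allI subsetI)
  have W: "weight_H_module sW GW LmW LzW LpW"
    and YW_graded: "\<And>k n v w m. v \<in> GV k \<Longrightarrow> w \<in> GW n \<Longrightarrow> YW v m w \<in> GW (k + n - m - 1)"
    using assms(6) unfolding VH_module_def by blast+
  have f_linear: "module_hom sV sW f" and f_Y: "\<And>v m u. f (Y v m u) = YW v m (f u)"
    and f_Lz: "\<And>r u. f (LzV r u) = LzW r (f u)"
    using assms(7) unfolding VH_hom_def module_hom_iff_linear by blast+
  have creation: "\<And>v. Y v (-1) one = v"
    using assms(5) unfolding H_module_vertex_algebra_def graded_vertex_algebra_def
      vertex_algebra_def by blast
  have "LzW r (f one) = 0" if "r \<ge> 1" for r
    using H_module_vertex_algebra_Lz_vacuum[OF assms(5) that] f_Lz module_hom.zero[OF f_linear]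
    by metis
  then have f_one: "f one \<in> GW 0"
    by (rule weight_H_module_degree_0_if_Lz_vanishes[OF W])
  fix n y
  assume "y \<in> f ` GV n"
  then obtain v where v: "v \<in> GV n" "y = f v"
    by blast
  have "f v = YW v (-1) (f one)"
    using f_Y creation by metis
  also have "\<dots> \<in> GW (n + 0 - (-1) - 1)"
    using YW_graded v(1) f_one by blast
  finally show "y \<in> GW n"
    using v by simp
qed

end
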